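(* For all $m\ge2$ and $n\ge1$, $CP_{m,n}\cap SDNN_{m,n}=SCP_{m,n}$.
   Context: $\mathbb{S}_{m,n}$: symmetric real $m$th order $n$-dimensional tensors. $(u^m)_{i_1\ldots i_m}=u_{i_1}\cdots u_{i_m}$; $(\mathcal{A}x^{m-1})_i=\sum_{i_2,\dots,i_m}a_{ii_2\ldots i_m}x_{i_2}\cdots x_{i_m}$; an H-eigenvalue of $\mathcal{A}$ is $\lambda\in\mathbb{R}$ with $\mathcal{A}x^{m-1}=\lambda(x_i^{m-1})_i$ for some nonzero $x\in\mathbb{R}^n$. $SDNN_{m,n}$ is the set of $\mathcal{A}\in\mathbb{S}_{m,n}$ with all entries nonnegative and all H-eigenvalues positive. $CP_{m,n}$ is the set of $\mathcal{A}=\sum_{k=1}^r(u^{(k)})^m$ with $u^{(k)}\in\mathbb{R}^n_+$; $SCP_{m,n}$ is the set of such $\mathcal{A}$ admitting a decomposition with $\mathrm{span}\{u^{(1)},\dots,u^{(r)}\}=\mathbb{R}^n$. *)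

theory Defs
  imports "HOL-Analysis.Analysis" "HOL-Library.Multiset"
begin

text \<open>An m-th order n-dimensional real tensor is represented as a function on index
lists over the finite index type 'n (with CARD('n) = n); only lists of length m are
meaningful, and the tensor is required to vanish on all other lists.\<close>

type_synonym 'n tensor = "'n list \<Rightarrow> real"

definition sym_tensors :: "nat \<Rightarrow> ('n::finite) tensor set" where
  "sym_tensors m = {A. (\<forall>xs. length xs \<noteq> m \<longrightarrow> A xs = 0) \<and>
      (\<forall>xs ys. length xs = m \<longrightarrow> mset xs = mset ys \<longrightarrow> A xs = A ys)}"

definition tpow :: "nat \<Rightarrow> real ^ ('n::finite) \<Rightarrow> 'n tensor" where
  "tpow m u = (\<lambda>xs. if length xs = m then (\<Prod>i\<leftarrow>xs. u $ i) else 0)"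

definition tapply :: "nat \<Rightarrow> ('n::finite) tensor \<Rightarrow> real ^ 'n \<Rightarrow> real ^ 'n" where
  "tapply m A x = (\<chi> i. \<Sum>is\<in>{is::'n list. length is = m - 1}. A (i # is) * (\<Prod>j\<leftarrow>is. x $ j))"

definition H_eigenvalue :: "nat \<Rightarrow> ('n::finite) tensor \<Rightarrow> real \<Rightarrow> bool" where
  "H_eigenvalue m A lam \<longleftrightarrow> (\<exists>x::real^'n. x \<noteq> 0 \<and> tapply m A x = (\<chi> i. lam * (x $ i) ^ (m - 1)))"

definition SDNN :: "nat \<Rightarrow> ('n::finite) tensor set" where
  "SDNN m = {A \<in> sym_tensors m. (\<forall>xs. 0 \<le> A xs) \<and> (\<forall>lam. H_eigenvalue m A lam \<longrightarrow> lam > 0)}"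

definition CP :: "nat \<Rightarrow> ('n::finite) tensor set" where
  "CP m = {A. \<exists>(r::nat) (u::nat \<Rightarrow> real^'n). (\<forall>k<r. \<forall>i. 0 \<le> u k $ i) \<and>
      A = (\<lambda>xs. \<Sum>k<r. tpow m (u k) xs)}"

definition SCP :: "nat \<Rightarrow> ('n::finite) tensor set" where
  "SCP m = {A. \<exists>(r::nat) (u::nat \<Rightarrow> real^'n). (\<forall>k<r. \<forall>i. 0 \<le> u k $ i) \<and>
      span (u ` {..<r}) = UNIV \<and> A = (\<lambda>xs. \<Sum>k<r. tpow m (u k) xs)}"

end

theory Submission
  imports Defs
begin

text \<open>For \<open>A = \<Sum>k. u k ^ m\<close> one has \<open>A x^(m-1) = \<Sum>k. (u k \<bullet> x)^(m-1) u k\<close>.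
  If the \<open>u k\<close> do not span, any nonzero \<open>x\<close> orthogonal to all of them is an H-eigenvector
  for the eigenvalue 0. Conversely, suppose \<open>A x^(m-1) = \<lambda> x^[m-1]\<close> with \<open>\<lambda> \<le> 0\<close>.
  For even \<open>m\<close>, pairing with \<open>x\<close> gives \<open>\<Sum>k. (u k \<bullet> x)^m = \<lambda> \<Sum>i. x i^m \<le> 0\<close>;
  for odd \<open>m\<close>, the left side is a nonnegative vector and the right side a nonpositive one.
  Either way \<open>u k \<bullet> x = 0\<close> for all \<open>k\<close>, so \<open>x = 0\<close> when the \<open>u k\<close> span.\<close>

definition tpow_sum :: "nat \<Rightarrow> (nat \<Rightarrow> real ^ ('n::finite)) \<Rightarrow> nat \<Rightarrow> 'n tensor" where
  "tpow_sum m u r = (\<lambda>xs. \<Sum>k<r. tpow m (u k) xs)"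

lemma mem_CP_iff:
  "A \<in> CP m \<longleftrightarrow> (\<exists>r u. (\<forall>k<r. \<forall>i. 0 \<le> u k $ i) \<and> A = tpow_sum m u r)"
  by (simp add: CP_def tpow_sum_def)

lemma mem_SCP_iff:
  "A \<in> SCP m \<longleftrightarrow>
    (\<exists>r u. (\<forall>k<r. \<forall>i. 0 \<le> u k $ i) \<and> span (u ` {..<r}) = UNIV \<and> A = tpow_sum m u r)"
  by (simp add: SCP_def tpow_sum_def)

lemma prod_list_map_mult:
  fixes f g :: "'a \<Rightarrow> 'b::comm_monoid_mult"
  shows "prod_list (map (\<lambda>j. f j * g j) xs) = prod_list (map f xs) * prod_list (map g xs)"
  by (induction xs) (simp_all add: ac_simps)

lemma prod_list_map_mset_eq:
  fixes f :: "'a \<Rightarrow> 'b::comm_monoid_mult"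
  assumes "mset xs = mset ys"
  shows "prod_list (map f xs) = prod_list (map f ys)"
  by (metis assms mset_map prod_mset_prod_list)

lemma sum_lists_length_prod_list:
  fixes f :: "'a::finite \<Rightarrow> 'b::comm_semiring_1"
  shows "(\<Sum>is\<in>{is. length is = n}. prod_list (map f is)) = (\<Sum>j\<in>UNIV. f j) ^ n"
proof (induction n)
  case 0
  have "{is::'a list. length is = 0} = {[]}" by auto
  then show ?case by simp
next
  case (Suc n)
  have lists_Suc: "{is::'a list. length is = Suc n} = (\<lambda>(a, l). a # l) ` (UNIV \<times> {l. length l = n})"
    by (auto simp: length_Suc_conv image_iff)
  have inj: "inj_on (\<lambda>(a, l). a # l) (UNIV \<times> {l::'a list. length l = n})"
    by (auto simp: inj_on_def)
  have "(\<Sum>is\<in>{is. length is = Suc n}. prod_list (map f is))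
      = (\<Sum>(a, l)\<in>UNIV \<times> {l. length l = n}. f a * prod_list (map f l))"
    unfolding lists_Suc by (subst sum.reindex[OF inj]) (simp add: case_prod_unfold)
  also have "\<dots> = (\<Sum>a\<in>UNIV. f a) * (\<Sum>l\<in>{l. length l = n}. prod_list (map f l))"
    by (simp add: sum.cartesian_product[symmetric] sum_product)
  finally show ?case using Suc by simp
qed

lemma tpow_sum_sym: "tpow_sum m u r \<in> sym_tensors m"
proof -
  have "tpow_sum m u r xs = tpow_sum m u r ys" if "length xs = m" "mset xs = mset ys" for xs ys
    using that mset_eq_length[OF that(2)]
    by (simp add: tpow_sum_def tpow_def prod_list_map_mset_eq[OF that(2)])
  then show ?thesis
    by (auto simp: sym_tensors_def tpow_sum_def tpow_def)
qed

lemma tpow_sum_nonneg: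
  assumes "\<forall>k<r. \<forall>i. 0 \<le> u k $ i"
  shows "0 \<le> tpow_sum m u r xs"
  using assms by (auto simp: tpow_sum_def tpow_def intro!: sum_nonneg prod_list_nonneg)

lemma tapply_tpow_sum:
  assumes "m \<ge> 1"
  shows "tapply m (tpow_sum m u r) x = (\<chi> i. \<Sum>k<r. u k $ i * (u k \<bullet> x) ^ (m - 1))"
proof -
  have "(\<Sum>is\<in>{is. length is = m - 1}. tpow_sum m u r (i # is) * (\<Prod>j\<leftarrow>is. x $ j))
      = (\<Sum>k<r. u k $ i * (u k \<bullet> x) ^ (m - 1))" for i
  proof -
    have "(\<Sum>is\<in>{is. length is = m - 1}. tpow_sum m u r (i # is) * (\<Prod>j\<leftarrow>is. x $ j))
        = (\<Sum>is\<in>{is. length is = m - 1}. \<Sum>k<r. u k $ i * (\<Prod>j\<leftarrow>is. u k $ j * x $ j))"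
      using assms
      by (intro sum.cong) (simp_all add: tpow_sum_def tpow_def sum_distrib_right
          prod_list_map_mult mult.assoc)
    also have "\<dots> = (\<Sum>k<r. u k $ i * (\<Sum>is\<in>{is. length is = m - 1}. \<Prod>j\<leftarrow>is. u k $ j * x $ j))"
      by (subst sum.swap) (simp add: sum_distrib_left)
    also have "\<dots> = (\<Sum>k<r. u k $ i * (u k \<bullet> x) ^ (m - 1))"
      by (simp add: sum_lists_length_prod_list inner_vec_def)
    finally show ?thesis .
  qed
  then show ?thesis
    by (simp add: tapply_def vec_eq_iff)
qed

lemma inner_tapply_tpow_sum:
  assumes "m \<ge> 1"
  shows "x \<bullet> tapply m (tpow_sum m u r) x = (\<Sum>k<r. (u k \<bullet> x) ^ m)"
proof -
  have "x \<bullet> tapply m (tpow_sum m u r) x = (\<Sum>k<r. (u k \<bullet> x) * (u k \<bullet> x) ^ (m - 1))"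
    by (simp add: tapply_tpow_sum[OF assms] inner_vec_def sum_distrib_left sum_distrib_right
        sum.swap[where A = UNIV] ac_simps)
  also have "\<dots> = (\<Sum>k<r. (u k \<bullet> x) ^ m)"
    using assms by (simp add: power_eq_if)
  finally show ?thesis .
qed

lemma span_eq_UNIV_iff_orthogonal:
  fixes S :: "'a::euclidean_space set"
  shows "span S = UNIV \<longleftrightarrow> (\<forall>x. (\<forall>y\<in>S. orthogonal y x) \<longrightarrow> x = 0)"
proof
  assume "span S = UNIV"
  then show "\<forall>x. (\<forall>y\<in>S. orthogonal y x) \<longrightarrow> x = 0"
    by (metis UNIV_I orthogonal_commute orthogonal_self orthogonal_to_span)
next
  assume "\<forall>x. (\<forall>y\<in>S. orthogonal y x) \<longrightarrow> x = 0"
  then show "span S = UNIV"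
    by (metis inner_commute orthogonal_def span_base span_not_UNIV_orthogonal)
qed

lemma nonpos_H_eigenvector_orthogonal:
  assumes "m \<ge> 2" and nonneg: "\<forall>k<r. \<forall>i. 0 \<le> u k $ i" and "lam \<le> 0"
    and eigen: "tapply m (tpow_sum m u r) x = (\<chi> i. lam * x $ i ^ (m - 1))"
  shows "\<forall>k<r. u k \<bullet> x = 0"
proof (cases "even m")
  case True
  have "(\<Sum>k<r. (u k \<bullet> x) ^ m) = x \<bullet> tapply m (tpow_sum m u r) x"
    using \<open>m \<ge> 2\<close> by (simp add: inner_tapply_tpow_sum)
  also have "\<dots> = lam * (\<Sum>i\<in>UNIV. x $ i ^ m)"
    using \<open>m \<ge> 2\<close> by (simp add: eigen inner_vec_def sum_distrib_left power_eq_if ac_simps)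
  also have "\<dots> \<le> 0"
    using \<open>lam \<le> 0\<close> True by (intro mult_nonpos_nonneg sum_nonneg) (simp_all add: zero_le_even_power)
  finally have "(\<Sum>k<r. (u k \<bullet> x) ^ m) = 0"
    using True by (intro antisym sum_nonneg) (simp_all add: zero_le_even_power)
  then show ?thesis
    using True by (simp add: sum_nonneg_eq_0_iff zero_le_even_power)
next
  case False
  then have even: "even (m - 1)" by simp
  have term_nonneg: "0 \<le> u k $ i * (u k \<bullet> x) ^ (m - 1)" if "k < r" for k i
    using nonneg that by (intro mult_nonneg_nonneg zero_le_even_power[OF even]) auto
  have terms_zero: "u k $ i * (u k \<bullet> x) ^ (m - 1) = 0" if "k < r" for k i
  proof -
    have "(\<Sum>k<r. u k $ i * (u k \<bullet> x) ^ (m - 1)) = lam * x $ i ^ (m - 1)"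
      using eigen \<open>m \<ge> 2\<close> by (simp add: tapply_tpow_sum vec_eq_iff)
    also have "\<dots> \<le> 0"
      using \<open>lam \<le> 0\<close> by (intro mult_nonpos_nonneg zero_le_even_power[OF even])
    finally have "(\<Sum>k<r. u k $ i * (u k \<bullet> x) ^ (m - 1)) = 0"
      by (intro antisym sum_nonneg term_nonneg) simp_all
    then show ?thesis
      using that term_nonneg by (subst (asm) sum_nonneg_eq_0_iff) auto
  qed
  show ?thesis
  proof (intro allI impI)
    fix k assume "k < r"
    show "u k \<bullet> x = 0"
    proof (rule ccontr)
      assume "u k \<bullet> x \<noteq> 0"
      then have "u k = 0"
        using terms_zero[OF \<open>k < r\<close>] by (simp add: vec_eq_iff)
      with \<open>u k \<bullet> x \<noteq> 0\<close> show False by simp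
    qed
  qed
qed

lemma H_eigenvalue_tpow_sum_pos:
  assumes "m \<ge> 2" and "\<forall>k<r. \<forall>i. 0 \<le> u k $ i" and "span (u ` {..<r}) = UNIV"
    and "H_eigenvalue m (tpow_sum m u r) lam"
  shows "lam > 0"
proof (rule ccontr)
  assume "\<not> lam > 0"
  obtain x where "x \<noteq> 0" and eigen: "tapply m (tpow_sum m u r) x = (\<chi> i. lam * x $ i ^ (m - 1))"
    using assms(4) by (auto simp: H_eigenvalue_def)
  have "\<forall>k<r. u k \<bullet> x = 0"
    using nonpos_H_eigenvector_orthogonal[OF assms(1,2) _ eigen] \<open>\<not> lam > 0\<close> by simp
  then have "x = 0"
    using assms(3) by (auto simp: span_eq_UNIV_iff_orthogonal orthogonal_def)
  with \<open>x \<noteq> 0\<close> show False ..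
qed

lemma H_eigenvalue_tpow_sum_zero:
  assumes "m \<ge> 2" and "span (u ` {..<r}) \<noteq> UNIV"
  shows "H_eigenvalue m (tpow_sum m u r) 0"
proof -
  obtain x where "x \<noteq> 0" and "\<forall>k<r. u k \<bullet> x = 0"
    using assms(2) by (auto simp: span_eq_UNIV_iff_orthogonal orthogonal_def)
  then have "tapply m (tpow_sum m u r) x = (\<chi> i. 0 * x $ i ^ (m - 1))"
    using assms(1) by (simp add: tapply_tpow_sum vec_eq_iff power_0_left)
  with \<open>x \<noteq> 0\<close> show ?thesis
    by (auto simp: H_eigenvalue_def)
qed

theorem mainTheorem12:
  fixes m :: nat
  assumes "m \<ge> 2"
  shows "(CP m :: ('n::finite) tensor set) \<inter> SDNN m = SCP m"
proof (intro equalityI subsetI)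
  fix A :: "'n tensor"
  assume A: "A \<in> CP m \<inter> SDNN m"
  then obtain r u where nonneg: "\<forall>k<r. \<forall>i. 0 \<le> u k $ i" and A_eq: "A = tpow_sum m u r"
    by (auto simp: mem_CP_iff)
  have "span (u ` {..<r}) = UNIV"
  proof (rule ccontr)
    assume "span (u ` {..<r}) \<noteq> UNIV"
    then have "H_eigenvalue m A 0"
      using H_eigenvalue_tpow_sum_zero[OF assms] A_eq by simp
    with A show False by (auto simp: SDNN_def)
  qed
  with nonneg A_eq show "A \<in> SCP m"
    by (auto simp: mem_SCP_iff)
next
  fix A :: "'n tensor"
  assume "A \<in> SCP m"
  then obtain r u where "\<forall>k<r. \<forall>i. 0 \<le> u k $ i" "span (u ` {..<r}) = UNIV" "A = tpow_sum m u r"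
    by (auto simp: mem_SCP_iff)
  then show "A \<in> CP m \<inter> SDNN m"
    using tpow_sum_sym tpow_sum_nonneg H_eigenvalue_tpow_sum_pos[OF assms]
    by (auto simp: mem_CP_iff SDNN_def)
qed

end
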